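(* Every straight domain is locally divided.
   Context: All rings are commutative with identity. An overring of a domain $A$ is a ring $B$ with $A\subseteq B\subseteq \operatorname{Frac}(A)$. A prime ideal $\mathfrak{p}$ of a domain $A$ is straight if for every overring $B$ of $A$, the $(A/\mathfrak{p})$-module $B/\mathfrak{p}B$ is torsion-free; $A$ is a straight domain if all its prime ideals are straight. A domain $A$ is divided if $\mathfrak{p}=\mathfrak{p}A_\mathfrak{p}$ for every prime ideal $\mathfrak{p}$, and locally divided if $A_\mathfrak{m}$ is divided for every maximal ideal $\mathfrak{m}$ of $A$. *)

theory Defs
  imports "HOL-Computational_Algebra.Polynomial_Factorial"
begin

text \<open>All rings considered are subrings of a field 'k (commutative with identity).
  A domain A is identified with its image in its fraction field 'a fract.\<close>

definition subring_of :: "'k::field set \<Rightarrow> bool" where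
  "subring_of R \<longleftrightarrow> 0 \<in> R \<and> 1 \<in> R \<and>
     (\<forall>x\<in>R. \<forall>y\<in>R. x + y \<in> R \<and> x - y \<in> R \<and> x * y \<in> R)"

definition ideal_of :: "'k::field set \<Rightarrow> 'k set \<Rightarrow> bool" where
  "ideal_of R I \<longleftrightarrow> I \<subseteq> R \<and> 0 \<in> I \<and>
     (\<forall>x\<in>I. \<forall>y\<in>I. x + y \<in> I) \<and> (\<forall>r\<in>R. \<forall>x\<in>I. r * x \<in> I)"

definition prime_ideal_of :: "'k::field set \<Rightarrow> 'k set \<Rightarrow> bool" where
  "prime_ideal_of R P \<longleftrightarrow> ideal_of R P \<and> 1 \<notin> P \<and>
     (\<forall>x\<in>R. \<forall>y\<in>R. x * y \<in> P \<longrightarrow> x \<in> P \<or> y \<in> P)"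

definition maximal_ideal_of :: "'k::field set \<Rightarrow> 'k set \<Rightarrow> bool" where
  "maximal_ideal_of R M \<longleftrightarrow> ideal_of R M \<and> M \<noteq> R \<and>
     (\<forall>I. ideal_of R I \<and> M \<subseteq> I \<longrightarrow> I = M \<or> I = R)"

definition ideal_ext :: "'k::field set \<Rightarrow> 'k set \<Rightarrow> 'k set" where
  "ideal_ext I B = \<Inter>{J. ideal_of B J \<and> I \<subseteq> J}"

definition frac_of :: "'k::field set \<Rightarrow> 'k set" where
  "frac_of R = {x / y | x y. x \<in> R \<and> y \<in> R \<and> y \<noteq> 0}"

definition overring_of :: "'k::field set \<Rightarrow> 'k set \<Rightarrow> bool" where
  "overring_of R B \<longleftrightarrow> subring_of B \<and> R \<subseteq> B \<and> B \<subseteq> frac_of R"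

definition localize :: "'k::field set \<Rightarrow> 'k set \<Rightarrow> 'k set" where
  "localize R P = {a / s | a s. a \<in> R \<and> s \<in> R \<and> s \<notin> P}"

text \<open>B / P B is a torsion-free (R/P)-module: a nonzero class of R/P
  (i.e. an element a of R - P) kills no nonzero class of B / PB.\<close>
definition torsion_free_quot :: "'k::field set \<Rightarrow> 'k set \<Rightarrow> 'k set \<Rightarrow> bool" where
  "torsion_free_quot R P B \<longleftrightarrow>
     (\<forall>a\<in>R - P. \<forall>b\<in>B. a * b \<in> ideal_ext P B \<longrightarrow> b \<in> ideal_ext P B)"

definition straight_prime :: "'k::field set \<Rightarrow> 'k set \<Rightarrow> bool" where
  "straight_prime R P \<longleftrightarrow> (\<forall>B. overring_of R B \<longrightarrow> torsion_free_quot R P B)"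

definition straight :: "'k::field set \<Rightarrow> bool" where
  "straight R \<longleftrightarrow> (\<forall>P. prime_ideal_of R P \<longrightarrow> straight_prime R P)"

definition divided :: "'k::field set \<Rightarrow> bool" where
  "divided R \<longleftrightarrow> (\<forall>P. prime_ideal_of R P \<longrightarrow> P = ideal_ext P (localize R P))"

definition locally_divided :: "'k::field set \<Rightarrow> bool" where
  "locally_divided R \<longleftrightarrow> (\<forall>M. maximal_ideal_of R M \<longrightarrow> divided (localize R M))"

definition straight_domain :: "'a::idom itself \<Rightarrow> bool" where
  "straight_domain _ \<longleftrightarrow> straight (range (to_fract :: 'a \<Rightarrow> 'a fract))"

definition locally_divided_domain :: "'a::idom itself \<Rightarrow> bool" where
  "locally_divided_domain _ \<longleftrightarrow> locally_divided (range (to_fract :: 'a \<Rightarrow> 'a fract))"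

end

theory Submission
  imports Defs
begin

text \<open>Fix a maximal ideal M of the straight domain R, a prime P \<subseteq> M, p \<in> P and t \<in> R - P,
  and put u = p / t. Straightness of P for the overrings R[u] and R[1/u] turns t u = p and
  t 1 = (1/u) p into u \<in> P R[u] and 1 \<in> P R[1/u]; multiplying the second relation by a power
  of u gives u^d \<in> P + P u + ... + P u^d for some d > 0. Over the local ring R_M, whose maximal
  ideal contains P, a Nakayama-type descent on d then yields u \<in> R_M. Hence P R_P \<subseteq> R_M for
  every prime P \<subseteq> M, so every prime Q of R_M is closed under division by elements of
  R_M - Q, which says that Q is divided.\<close>

lemma ideal_of_self: "subring_of R \<Longrightarrow> ideal_of R R"
  by (simp add: subring_of_def ideal_of_def)

lemma ideal_of_sum:
  assumes "ideal_of R I" "\<And>i. i \<in> A \<Longrightarrow> f i \<in> I"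
  shows "sum f A \<in> I"
  using assms(2)
  by (induction A rule: infinite_finite_induct) (use assms(1) in \<open>auto simp: ideal_of_def\<close>)

definition coeffs_in :: "'a::zero set \<Rightarrow> 'a poly \<Rightarrow> bool" where
  "coeffs_in C f \<longleftrightarrow> (\<forall>i. coeff f i \<in> C)"

lemma coeffs_in_mono: "C \<subseteq> D \<Longrightarrow> coeffs_in C f \<Longrightarrow> coeffs_in D f"
  by (auto simp: coeffs_in_def)

lemma coeffs_in_const: "0 \<in> C \<Longrightarrow> c \<in> C \<Longrightarrow> coeffs_in C [:c:]"
  by (simp add: coeffs_in_def coeff_pCons split: nat.split)

lemma coeffs_in_add: "ideal_of R I \<Longrightarrow> coeffs_in I f \<Longrightarrow> coeffs_in I g \<Longrightarrow> coeffs_in I (f + g)"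
  by (simp add: coeffs_in_def ideal_of_def)

lemma coeffs_in_mult:
  assumes "ideal_of R I" "coeffs_in R f" "coeffs_in I g"
  shows "coeffs_in I (f * g)"
  unfolding coeffs_in_def coeff_mult
  using assms by (auto simp: coeffs_in_def ideal_of_def intro!: ideal_of_sum)

text \<open>For a subring R, adjoin R u is the ring R[u]; for an ideal P of R it is the extended
  ideal P R[u].\<close>

definition adjoin :: "'k::field set \<Rightarrow> 'k \<Rightarrow> 'k set" where
  "adjoin C u = {poly f u | f. coeffs_in C f}"

definition adjoin_deg :: "'k::field set \<Rightarrow> 'k \<Rightarrow> nat \<Rightarrow> 'k set" where
  "adjoin_deg C u j = {poly f u | f. coeffs_in C f \<and> degree f \<le> j}"

lemma subset_adjoin: "0 \<in> C \<Longrightarrow> C \<subseteq> adjoin C u"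
  unfolding adjoin_def by (force intro: coeffs_in_const)

lemma adjoin_mono: "C \<subseteq> D \<Longrightarrow> adjoin C u \<subseteq> adjoin D u"
  unfolding adjoin_def by (blast intro: coeffs_in_mono)

lemma adjoin_deg_mono: "C \<subseteq> D \<Longrightarrow> adjoin_deg C u j \<subseteq> adjoin_deg D u j"
  unfolding adjoin_deg_def by (blast intro: coeffs_in_mono)

lemma mem_adjoin_self: "subring_of R \<Longrightarrow> u \<in> adjoin R u"
  unfolding adjoin_def
  by (intro CollectI exI[of _ "[:0, 1:]"])
    (simp add: coeffs_in_def subring_of_def coeff_pCons split: nat.split)

lemma ideal_of_adjoin:
  assumes "subring_of R" "ideal_of R I"
  shows "ideal_of (adjoin R u) (adjoin I u)"
  unfolding ideal_of_def
proof (intro conjI ballI)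
  have "I \<subseteq> R" using assms(2) by (simp add: ideal_of_def)
  then show "adjoin I u \<subseteq> adjoin R u" by (rule adjoin_mono)
  show "0 \<in> adjoin I u" using assms(2) subset_adjoin by (auto simp: ideal_of_def)
next
  fix x y assume "x \<in> adjoin I u" "y \<in> adjoin I u"
  then obtain f g where "x = poly f u" "y = poly g u" "coeffs_in I f" "coeffs_in I g"
    by (auto simp: adjoin_def)
  then show "x + y \<in> adjoin I u"
    using coeffs_in_add[OF assms(2)] unfolding adjoin_def by (metis (mono_tags) mem_Collect_eq poly_add)
next
  fix x y assume "x \<in> adjoin R u" "y \<in> adjoin I u"
  then obtain f g where "x = poly f u" "y = poly g u" "coeffs_in R f" "coeffs_in I g"
    by (auto simp: adjoin_def)
  then show "x * y \<in> adjoin I u"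
    using coeffs_in_mult[OF assms(2)] unfolding adjoin_def by (metis (mono_tags) mem_Collect_eq poly_mult)
qed

lemma subring_of_adjoin:
  assumes "subring_of R"
  shows "subring_of (adjoin R u)"
proof -
  have ideal: "ideal_of (adjoin R u) (adjoin R u)"
    using assms by (intro ideal_of_adjoin ideal_of_self)
  have "1 \<in> adjoin R u" using assms subset_adjoin by (auto simp: subring_of_def)
  moreover have "x - y \<in> adjoin R u" if xy: "x \<in> adjoin R u" "y \<in> adjoin R u" for x y
  proof -
    obtain f g where "x = poly f u" "y = poly g u" "coeffs_in R f" "coeffs_in R g"
      using xy unfolding adjoin_def by blast
    moreover have "coeffs_in R (f - g)" using calculation assms by (simp add: coeffs_in_def subring_of_def)
    ultimately show ?thesis unfolding adjoin_def by (metis (mono_tags) mem_Collect_eq poly_diff)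
  qed
  ultimately show ?thesis using ideal by (auto simp: subring_of_def ideal_of_def)
qed

lemma adjoin_deg_subset_adjoin: "adjoin_deg C u j \<subseteq> adjoin C u"
  by (auto simp: adjoin_deg_def adjoin_def)

lemma zero_mem_adjoin_deg: "0 \<in> C \<Longrightarrow> 0 \<in> adjoin_deg C u j"
  unfolding adjoin_deg_def by (intro CollectI exI[of _ 0]) (simp add: coeffs_in_def)

lemma add_mem_adjoin_deg:
  assumes "ideal_of R I" "x \<in> adjoin_deg I u j" "y \<in> adjoin_deg I u j"
  shows "x + y \<in> adjoin_deg I u j"
proof -
  obtain f g where "x = poly f u" "coeffs_in I f" "degree f \<le> j"
    and "y = poly g u" "coeffs_in I g" "degree g \<le> j"
    using assms(2,3) unfolding adjoin_deg_def by blast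
  then show ?thesis
    using coeffs_in_add[OF assms(1)] degree_add_le unfolding adjoin_deg_def
    by (metis (mono_tags) mem_Collect_eq poly_add)
qed

lemma sum_mem_adjoin_deg:
  assumes "ideal_of R I" "\<And>i. i \<in> A \<Longrightarrow> f i \<in> adjoin_deg I u j"
  shows "sum f A \<in> adjoin_deg I u j"
  using assms(2)
  by (induction A rule: infinite_finite_induct)
    (use assms(1) in \<open>auto simp: ideal_of_def intro: zero_mem_adjoin_deg add_mem_adjoin_deg\<close>)

lemma mult_mem_adjoin_deg:
  assumes "ideal_of R I" "c \<in> I" "x \<in> adjoin_deg R u j"
  shows "c * x \<in> adjoin_deg I u j"
proof -
  obtain g where "x = poly g u" "coeffs_in R g" "degree g \<le> j"
    using assms(3) unfolding adjoin_deg_def by blast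
  moreover have "coeffs_in I (smult c g)"
    using calculation assms(1,2) unfolding coeffs_in_def ideal_of_def by (metis coeff_smult mult.commute)
  ultimately show ?thesis
    unfolding adjoin_deg_def by (intro CollectI exI[of _ "smult c g"]) (auto intro: order_trans)
qed

lemma power_mem_adjoin_deg:
  assumes "subring_of S" "i \<le> j"
  shows "u ^ i \<in> adjoin_deg S u j"
  unfolding adjoin_deg_def using assms
  by (intro CollectI exI[of _ "monom 1 i"])
    (auto simp: coeffs_in_def coeff_monom subring_of_def poly_monom degree_monom_eq)

lemma poly_mem_adjoin_deg:
  assumes "subring_of S" "ideal_of S C" "coeffs_in C h"
    and "\<And>i. i \<le> degree h \<Longrightarrow> u ^ i \<in> adjoin_deg S u j"
  shows "poly h u \<in> adjoin_deg C u j"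
  unfolding poly_altdef using assms
  by (auto intro!: sum_mem_adjoin_deg mult_mem_adjoin_deg simp: coeffs_in_def)

lemma all_powers_mem_adjoin_deg:
  assumes S: "subring_of S" and top: "u ^ Suc j \<in> adjoin_deg S u j"
  shows "u ^ k \<in> adjoin_deg S u j"
proof (induction k)
  case 0
  show ?case using S by (rule power_mem_adjoin_deg) simp
next
  case (Suc k)
  then obtain g where g: "u ^ k = poly g u" "coeffs_in S g" "degree g \<le> j"
    unfolding adjoin_deg_def by blast
  have "u ^ i \<in> adjoin_deg S u j" if "i \<le> degree (pCons 0 g)" for i
  proof (cases "i \<le> j")
    case True
    with S show ?thesis by (rule power_mem_adjoin_deg)
  next
    case False
    with that g(3) have "i = Suc j" by (cases "g = 0") auto
    then show ?thesis using top by simp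
  qed
  moreover have "coeffs_in S (pCons 0 g)"
    using g(2) S by (simp add: coeffs_in_def coeff_pCons subring_of_def split: nat.split)
  ultimately have "poly (pCons 0 g) u \<in> adjoin_deg S u j"
    using S ideal_of_self[OF S] by (intro poly_mem_adjoin_deg)
  then show ?case using g(1) by simp
qed

locale jacobson_ideal =
  fixes S C :: "'k::field set"
  assumes subring: "subring_of S" and ideal: "ideal_of S C"
    and one_minus_unit: "\<And>c. c \<in> C \<Longrightarrow> \<exists>e\<in>S. e * (1 - c) = 1"
begin

lemma power_mem_adjoin_deg_lower:
  assumes "0 < j" "u ^ j \<in> adjoin_deg C u j"
  shows "u ^ j \<in> adjoin_deg S u (j - 1)"
proof -
  obtain g where g: "u ^ j = poly g u" "coeffs_in C g" "degree g \<le> j"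
    using assms(2) unfolding adjoin_deg_def by blast
  define c where "c = coeff g j"
  obtain e where e: "e \<in> S" "e * (1 - c) = 1"
    using one_minus_unit g(2) by (auto simp: coeffs_in_def c_def)
  define h where "h = smult e (g - monom c j)"
  have "poly h u = e * ((1 - c) * u ^ j)"
    using g(1) by (simp add: h_def poly_monom algebra_simps)
  then have "u ^ j = poly h u"
    using e(2) by (simp add: mult.assoc[symmetric])
  moreover have "coeffs_in S h"
    using g(2) e(1) ideal subring
    by (auto simp: coeffs_in_def h_def coeff_monom c_def ideal_of_def subring_of_def)
  moreover have "degree h \<le> j - 1"
    using g(3) assms(1)
    by (intro degree_le) (auto simp: h_def coeff_monom c_def coeff_eq_0)
  ultimately show ?thesis unfolding adjoin_deg_def by blast
qed

text \<open>Once S[u] is spanned by 1, ..., u^(j+1), the power u^(j+1) = u^j u \<in> C[u]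
  is a C-combination of them, and its top coefficient c can be absorbed because 1 - c is a unit.\<close>

lemma mem_if_power_mem_adjoin_deg:
  assumes "u \<in> adjoin C u" "u ^ Suc j \<in> adjoin_deg S u j"
  shows "u \<in> S"
  using assms(2)
proof (induction j)
  case 0
  then obtain g where "u = poly g u" "coeffs_in S g" "degree g = 0"
    unfolding adjoin_deg_def by auto
  then show ?case by (metis coeffs_in_def degree_0_id poly_pCons poly_0 mult_zero_right add_0_right)
next
  case (Suc j)
  have "u ^ j \<in> adjoin S u"
    using power_mem_adjoin_deg[OF subring] adjoin_deg_subset_adjoin by blast
  then have "u ^ j * u \<in> adjoin C u"
    using ideal_of_adjoin[OF subring ideal] assms(1) by (auto simp: ideal_of_def)
  then obtain h where h: "u ^ Suc j = poly h u" "coeffs_in C h"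
    unfolding adjoin_def by (auto simp: mult.commute)
  have "u ^ Suc j \<in> adjoin_deg C u (Suc j)"
    using poly_mem_adjoin_deg[OF subring ideal h(2)] all_powers_mem_adjoin_deg[OF subring Suc.prems] h(1)
    by simp
  then have "u ^ Suc j \<in> adjoin_deg S u j"
    using power_mem_adjoin_deg_lower by fastforce
  then show ?case by (rule Suc.IH)
qed

lemma mem_if_integral_over_ideal:
  assumes "u \<in> adjoin C u" "0 < d" "u ^ d \<in> adjoin_deg C u d"
  shows "u \<in> S"
proof -
  have "u ^ Suc (d - 1) \<in> adjoin_deg S u (d - 1)"
    using power_mem_adjoin_deg_lower assms(2,3) by simp
  with assms(1) show ?thesis by (rule mem_if_power_mem_adjoin_deg)
qed

end

lemma localize_intro: "a \<in> R \<Longrightarrow> s \<in> R \<Longrightarrow> s \<notin> M \<Longrightarrow> a / s \<in> localize R M"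
  by (auto simp: localize_def)

locale localization =
  fixes R M :: "'k::field set"
  assumes subring: "subring_of R" and prime: "prime_ideal_of R M"
begin

abbreviation S :: "'k set" where "S \<equiv> localize R M"

definition max_ideal :: "'k set" where
  "max_ideal = {a / s | a s. a \<in> M \<and> s \<in> R \<and> s \<notin> M}"

lemma denom_nonzero: "s \<notin> M \<Longrightarrow> s \<noteq> 0"
  using prime by (auto simp: prime_ideal_of_def ideal_of_def)

lemma denom_mult:
  "s \<in> R \<Longrightarrow> s' \<in> R \<Longrightarrow> s \<notin> M \<Longrightarrow> s' \<notin> M \<Longrightarrow> s * s' \<in> R \<and> s * s' \<notin> M"
  using prime subring by (auto simp: prime_ideal_of_def subring_of_def)

lemma subset_localize: "R \<subseteq> S"
proof
  fix r assume "r \<in> R"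
  with subring prime show "r \<in> S"
    using localize_intro[of r R 1 M] by (simp add: subring_of_def prime_ideal_of_def)
qed

lemma subring_localize: "subring_of S"
  unfolding subring_of_def
proof (intro conjI ballI)
  show "0 \<in> S" "1 \<in> S" using subset_localize subring by (auto simp: subring_of_def)
next
  fix x y assume "x \<in> S" "y \<in> S"
  then obtain a s b s' where x: "x = a / s" "a \<in> R" "s \<in> R" "s \<notin> M"
    and y: "y = b / s'" "b \<in> R" "s' \<in> R" "s' \<notin> M"
    unfolding localize_def by blast
  have ss: "s * s' \<in> R" "s * s' \<notin> M" using denom_mult x y by auto
  have "x + y = (a * s' + b * s) / (s * s')" "x - y = (a * s' - b * s) / (s * s')"
    using x y by (simp_all add: denom_nonzero field_simps)
  moreover have "x * y = (a * b) / (s * s')" by (simp add: x(1) y(1))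
  ultimately show "x + y \<in> S" "x - y \<in> S" "x * y \<in> S"
    using x y ss subring by (auto intro!: localize_intro simp: subring_of_def)
qed

lemma subset_max_ideal: "M \<subseteq> max_ideal"
proof
  fix a assume "a \<in> M"
  with subring prime show "a \<in> max_ideal"
    unfolding max_ideal_def by (intro CollectI exI[of _ a] exI[of _ 1])
      (auto simp: subring_of_def prime_ideal_of_def)
qed

lemma ideal_max_ideal: "ideal_of S max_ideal"
  unfolding ideal_of_def
proof (intro conjI ballI)
  show "max_ideal \<subseteq> S"
    using prime by (auto simp: max_ideal_def localize_def prime_ideal_of_def ideal_of_def)
  show "0 \<in> max_ideal"
    using subset_max_ideal prime by (auto simp: prime_ideal_of_def ideal_of_def)
next
  fix x y assume "x \<in> max_ideal" "y \<in> max_ideal"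
  then obtain a s b s' where x: "x = a / s" "a \<in> M" "s \<in> R" "s \<notin> M"
    and y: "y = b / s'" "b \<in> M" "s' \<in> R" "s' \<notin> M"
    unfolding max_ideal_def by blast
  have "x + y = (s' * a + s * b) / (s * s')"
    using x y by (simp add: denom_nonzero field_simps)
  moreover have "s' * a + s * b \<in> M"
    using x y prime by (simp add: prime_ideal_of_def ideal_of_def)
  ultimately show "x + y \<in> max_ideal"
    using denom_mult x y unfolding max_ideal_def by blast
next
  fix x y assume "x \<in> S" "y \<in> max_ideal"
  then obtain a s b s' where x: "x = a / s" "a \<in> R" "s \<in> R" "s \<notin> M"
    and y: "y = b / s'" "b \<in> M" "s' \<in> R" "s' \<notin> M"
    unfolding localize_def max_ideal_def by blast
  have "x * y = (a * b) / (s * s')" using x y by simp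
  moreover have "a * b \<in> M"
    using x y prime by (simp add: prime_ideal_of_def ideal_of_def)
  ultimately show "x * y \<in> max_ideal"
    using denom_mult x y unfolding max_ideal_def by blast
qed

lemma jacobson_max_ideal: "jacobson_ideal S max_ideal"
proof
  show "subring_of S" by (rule subring_localize)
  show "ideal_of S max_ideal" by (rule ideal_max_ideal)
next
  fix c assume "c \<in> max_ideal"
  then obtain b s where c: "c = b / s" "b \<in> M" "s \<in> R" "s \<notin> M"
    unfolding max_ideal_def by blast
  have bR: "b \<in> R" using c(2) prime by (auto simp: prime_ideal_of_def ideal_of_def)
  have "s - b \<notin> M"
  proof
    assume "s - b \<in> M"
    with c(2) prime have "(s - b) + b \<in> M" unfolding prime_ideal_of_def ideal_of_def by blast
    with c(4) show False by simp
  qed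
  moreover have "s - b \<in> R" using bR c(3) subring by (simp add: subring_of_def)
  ultimately have "s / (s - b) \<in> S" using c(3) by (intro localize_intro)
  moreover have "s / (s - b) * (1 - c) = 1"
    using c(1) denom_nonzero[OF c(4)] denom_nonzero[OF \<open>s - b \<notin> M\<close>] by (simp add: field_simps)
  ultimately show "\<exists>e\<in>S. e * (1 - c) = 1" by blast
qed

end

lemma mult_mem_ideal_ext: "p \<in> P \<Longrightarrow> b \<in> B \<Longrightarrow> b * p \<in> ideal_ext P B"
  by (auto simp: ideal_ext_def ideal_of_def)

lemma ideal_ext_adjoin_subset:
  assumes "subring_of R" "ideal_of R I"
  shows "ideal_ext I (adjoin R u) \<subseteq> adjoin I u"
  unfolding ideal_ext_def
  using ideal_of_adjoin[OF assms] subset_adjoin[of I u] assms(2) by (auto simp: ideal_of_def)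

lemma overring_of_adjoin:
  assumes "subring_of R" "frac_of R = UNIV"
  shows "overring_of R (adjoin R u)"
  using assms subring_of_adjoin subset_adjoin[of R u] by (auto simp: overring_of_def subring_of_def)

lemma straight_prime_adjoin_cancel:
  assumes R: "subring_of R" "frac_of R = UNIV" and P: "straight_prime R P" "ideal_of R P"
    and t: "t \<in> R" "t \<notin> P" and b: "b \<in> adjoin R u"
    and rel: "t * b = x * p" "x \<in> adjoin R u" "p \<in> P"
  shows "b \<in> adjoin P u"
proof -
  have "t * b \<in> ideal_ext P (adjoin R u)" using rel mult_mem_ideal_ext by simp
  then have "b \<in> ideal_ext P (adjoin R u)"
    using P(1) overring_of_adjoin[OF R] t b by (auto simp: straight_prime_def torsion_free_quot_def)
  then show ?thesis using ideal_ext_adjoin_subset[OF R(1) P(2)] by blast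
qed

lemma power_mem_adjoin_deg_if_one_mem_adjoin_inverse:
  assumes "0 \<in> P" "1 \<notin> P" "u \<noteq> 0" "1 \<in> adjoin P (inverse u)"
  obtains d where "0 < d" "u ^ d \<in> adjoin_deg P u d"
proof -
  obtain f where f: "1 = poly f (inverse u)" "coeffs_in P f"
    using assms(4) unfolding adjoin_def by blast
  have "0 < degree f"
  proof (rule ccontr)
    assume "\<not> 0 < degree f"
    then have "1 = coeff f 0"
      using f(1) by (metis degree_0_id neq0_conv poly_pCons poly_0 mult_zero_right add_0_right)
    with f(2) assms(2) show False by (metis coeffs_in_def)
  qed
  moreover have "u ^ degree f = poly (reflect_poly f) u"
    using poly_reflect_poly_nz[OF assms(3), of f] f(1) by simp
  moreover have "coeffs_in P (reflect_poly f)"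
    using f(2) assms(1) by (auto simp: coeffs_in_def coeff_reflect_poly)
  ultimately show ?thesis
    using that degree_reflect_poly_le unfolding adjoin_deg_def by blast
qed

lemma (in localization) fraction_mem_localize:
  assumes frac: "frac_of R = UNIV" and straight: "straight R"
    and P: "prime_ideal_of R P" "P \<subseteq> M" and p: "p \<in> P" and t: "t \<in> R" "t \<notin> P"
  shows "p / t \<in> S"
proof (cases "p = 0")
  case True
  then show ?thesis using subring subset_localize by (auto simp: subring_of_def)
next
  case False
  define u where "u = p / t"
  have sP: "straight_prime R P" using straight P(1) by (simp add: straight_def)
  have iP: "ideal_of R P" and P01: "0 \<in> P" "1 \<notin> P"
    using P(1) by (auto simp: prime_ideal_of_def ideal_of_def)
  have "t \<noteq> 0" using t(2) P01 by auto
  have one: "1 \<in> adjoin R v" for v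
    using subring subset_adjoin[of R v] by (auto simp: subring_of_def)
  have "t * u = 1 * p" using \<open>t \<noteq> 0\<close> by (simp add: u_def)
  then have u: "u \<in> adjoin P u"
    by (rule straight_prime_adjoin_cancel[OF subring frac sP iP t mem_adjoin_self[OF subring] _ one p])
  have "t * 1 = inverse u * p" using False by (simp add: u_def)
  then have "1 \<in> adjoin P (inverse u)"
    by (rule straight_prime_adjoin_cancel[OF subring frac sP iP t one _ mem_adjoin_self[OF subring] p])
  moreover have "u \<noteq> 0" using False \<open>t \<noteq> 0\<close> by (simp add: u_def)
  ultimately obtain d where "0 < d" "u ^ d \<in> adjoin_deg P u d"
    using power_mem_adjoin_deg_if_one_mem_adjoin_inverse[OF P01] by blast
  moreover have "P \<subseteq> max_ideal" using P(2) subset_max_ideal by blast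
  ultimately have "u \<in> S"
    using jacobson_ideal.mem_if_integral_over_ideal[OF jacobson_max_ideal, of u d] u
      adjoin_mono[of P max_ideal u] adjoin_deg_mono[of P max_ideal u d] by blast
  then show ?thesis by (simp add: u_def)
qed

lemma prime_ideal_of_contract:
  assumes R: "subring_of R" and "R \<subseteq> S" and Q: "prime_ideal_of S Q"
  shows "prime_ideal_of R (Q \<inter> R)"
  unfolding prime_ideal_of_def ideal_of_def
proof (intro conjI ballI impI)
  show "Q \<inter> R \<subseteq> R" by blast
  show "0 \<in> Q \<inter> R" using R Q by (simp add: subring_of_def prime_ideal_of_def ideal_of_def)
  show "1 \<notin> Q \<inter> R" using Q by (simp add: prime_ideal_of_def)
next
  fix x y assume "x \<in> Q \<inter> R" "y \<in> Q \<inter> R"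
  then show "x + y \<in> Q \<inter> R" using R Q by (simp add: subring_of_def prime_ideal_of_def ideal_of_def)
next
  fix r x assume "r \<in> R" "x \<in> Q \<inter> R"
  then show "r * x \<in> Q \<inter> R"
    using R Q \<open>R \<subseteq> S\<close> by (auto simp: subring_of_def prime_ideal_of_def ideal_of_def)
next
  fix x y assume "x \<in> R" "y \<in> R" "x * y \<in> Q \<inter> R"
  then show "x \<in> Q \<inter> R \<or> y \<in> Q \<inter> R"
    using Q \<open>R \<subseteq> S\<close> by (auto simp: prime_ideal_of_def)
qed

lemma eq_ideal_ext_localize_if_div_closed:
  assumes S: "subring_of S" and Q: "prime_ideal_of S Q"
    and div: "\<And>y s. y \<in> Q \<Longrightarrow> s \<in> S \<Longrightarrow> s \<notin> Q \<Longrightarrow> y / s \<in> Q"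
  shows "Q = ideal_ext Q (localize S Q)"
proof -
  have "ideal_of (localize S Q) Q"
    unfolding ideal_of_def
  proof (intro conjI ballI)
    show "Q \<subseteq> localize S Q"
      using S Q localize_intro[of _ S 1 Q] by (auto simp: subring_of_def prime_ideal_of_def ideal_of_def)
    show "0 \<in> Q" using Q by (simp add: prime_ideal_of_def ideal_of_def)
  next
    fix x y assume "x \<in> Q" "y \<in> Q"
    then show "x + y \<in> Q" using Q by (simp add: prime_ideal_of_def ideal_of_def)
  next
    fix r x assume "r \<in> localize S Q" "x \<in> Q"
    then obtain a s where "r * x = (a * x) / s" "a * x \<in> Q" "s \<in> S" "s \<notin> Q"
      using Q unfolding localize_def prime_ideal_of_def ideal_of_def by auto
    then show "r * x \<in> Q" using div by simp
  qed
  then show ?thesis by (auto simp: ideal_ext_def)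
qed

lemma (in localization) divided_localize:
  assumes frac: "frac_of R = UNIV" and straight: "straight R"
  shows "divided S"
  unfolding divided_def
proof (intro allI impI)
  fix Q assume Q: "prime_ideal_of S Q"
  have unit: "w \<notin> Q" if w: "w \<in> R" "w \<notin> M" for w
  proof
    assume "w \<in> Q"
    moreover have "1 / w \<in> S" using w subring by (intro localize_intro) (auto simp: subring_of_def)
    ultimately have "(1 / w) * w \<in> Q" using Q unfolding prime_ideal_of_def ideal_of_def by blast
    moreover have "(1 / w) * w = 1" using denom_nonzero[OF w(2)] by simp
    ultimately show False using Q by (simp add: prime_ideal_of_def)
  qed
  have P: "prime_ideal_of R (Q \<inter> R)" "Q \<inter> R \<subseteq> M"
    using prime_ideal_of_contract[OF subring subset_localize Q] unit by auto
  have QS: "Q \<subseteq> S" and Qmult: "\<And>r x. r \<in> S \<Longrightarrow> x \<in> Q \<Longrightarrow> r * x \<in> Q"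
    and Qprime: "\<And>x y. x \<in> S \<Longrightarrow> y \<in> S \<Longrightarrow> x * y \<in> Q \<Longrightarrow> x \<in> Q \<or> y \<in> Q"
    using Q by (auto simp: prime_ideal_of_def ideal_of_def)
  have "y / s \<in> Q" if y: "y \<in> Q" and s: "s \<in> S" "s \<notin> Q" for y s
  proof -
    obtain p w where pw: "y = p / w" "p \<in> R" "w \<in> R" "w \<notin> M"
      using y QS unfolding localize_def by blast
    obtain t w' where tw: "s = t / w'" "t \<in> R" "w' \<in> R" "w' \<notin> M"
      using s unfolding localize_def by blast
    have w0: "w \<noteq> 0" "w' \<noteq> 0" using pw tw denom_nonzero by auto
    have "p = w * y" using pw w0 by simp
    then have pQ: "p \<in> Q \<inter> R" using Qmult[of w y] y pw subset_localize by auto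
    have "t = s * w'" using tw w0 by simp
    moreover have "w' \<notin> Q" using unit tw by blast
    ultimately have "t \<notin> Q \<inter> R" using Qprime[of s w'] s tw subset_localize by auto
    with pQ have "p / t \<in> S" using fraction_mem_localize[OF frac straight P] tw by blast
    moreover have "w' / w \<in> S" using pw tw by (intro localize_intro)
    moreover have "y / s = (p / t) * (w' / w)" using pw tw denom_nonzero by simp
    ultimately have "y / s \<in> S" using subring_localize unfolding subring_of_def by metis
    moreover have "(y / s) * s \<in> Q"
      using y s Q by (auto simp: prime_ideal_of_def ideal_of_def)
    ultimately show ?thesis using Qprime s by blast
  qed
  with subring_localize Q show "Q = ideal_ext Q (localize S Q)"
    by (rule eq_ideal_ext_localize_if_div_closed)
qed

lemma ideal_of_add_multiples:
  assumes R: "subring_of R" and M: "ideal_of R M" and x: "x \<in> R"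
  shows "ideal_of R {m + x * r | m r. m \<in> M \<and> r \<in> R}" (is "ideal_of R ?I")
proof -
  have R0: "0 \<in> R" and Radd: "\<And>a b. a \<in> R \<Longrightarrow> b \<in> R \<Longrightarrow> a + b \<in> R"
    and Rmult: "\<And>a b. a \<in> R \<Longrightarrow> b \<in> R \<Longrightarrow> a * b \<in> R"
    using R by (auto simp: subring_of_def)
  have MR: "M \<subseteq> R" and M0: "0 \<in> M" and Madd: "\<And>a b. a \<in> M \<Longrightarrow> b \<in> M \<Longrightarrow> a + b \<in> M"
    and Mmult: "\<And>r a. r \<in> R \<Longrightarrow> a \<in> M \<Longrightarrow> r * a \<in> M"
    using M by (auto simp: ideal_of_def)
  show ?thesis
    unfolding ideal_of_def
  proof (intro conjI ballI)
    show "?I \<subseteq> R" using MR x by (auto intro!: Radd Rmult)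
    have "0 = 0 + x * 0" by simp
    with M0 R0 show "0 \<in> ?I" by blast
  next
    fix a b assume "a \<in> ?I" "b \<in> ?I"
    then obtain m r m' r' where "a = m + x * r" "b = m' + x * r'"
      and mr: "m \<in> M" "r \<in> R" "m' \<in> M" "r' \<in> R"
      by blast
    then have "a + b = (m + m') + x * (r + r')" by (simp add: algebra_simps)
    moreover have "m + m' \<in> M" "r + r' \<in> R" using mr by (auto intro: Madd Radd)
    ultimately show "a + b \<in> ?I" by blast
  next
    fix c a assume "c \<in> R" "a \<in> ?I"
    then obtain m r where "a = m + x * r" and mr: "m \<in> M" "r \<in> R" by blast
    then have "c * a = c * m + x * (c * r)" by (simp add: algebra_simps)
    moreover have "c * m \<in> M" "c * r \<in> R" using mr \<open>c \<in> R\<close> by (auto intro: Mmult Rmult)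
    ultimately show "c * a \<in> ?I" by blast
  qed
qed

lemma prime_ideal_of_maximal:
  assumes R: "subring_of R" and M: "maximal_ideal_of R M"
  shows "prime_ideal_of R M"
proof -
  have iM: "ideal_of R M" and "M \<noteq> R"
    and max: "\<And>I. ideal_of R I \<Longrightarrow> M \<subseteq> I \<Longrightarrow> I = M \<or> I = R"
    using M by (auto simp: maximal_ideal_of_def)
  have MR: "M \<subseteq> R" and Madd: "\<And>a b. a \<in> M \<Longrightarrow> b \<in> M \<Longrightarrow> a + b \<in> M"
    and Mmult: "\<And>r a. r \<in> R \<Longrightarrow> a \<in> M \<Longrightarrow> r * a \<in> M"
    using iM by (auto simp: ideal_of_def)
  have R01: "0 \<in> R" "1 \<in> R" using R by (auto simp: subring_of_def)
  have "1 \<notin> M"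
  proof
    assume "1 \<in> M"
    then have "R \<subseteq> M" using Mmult[of _ 1] by auto
    with MR \<open>M \<noteq> R\<close> show False by blast
  qed
  moreover have "y \<in> M" if xy: "x \<in> R" "y \<in> R" "x * y \<in> M" "x \<notin> M" for x y
  proof -
    let ?I = "{m + x * r | m r. m \<in> M \<and> r \<in> R}"
    have "M \<subseteq> ?I"
    proof
      fix m assume "m \<in> M"
      with R01 show "m \<in> ?I" by (intro CollectI exI[of _ m] exI[of _ 0]) simp
    qed
    moreover have "x \<in> ?I" using R01 iM by (intro CollectI exI[of _ 0] exI[of _ 1]) (simp add: ideal_of_def)
    ultimately have "?I = R" using max[OF ideal_of_add_multiples[OF R iM xy(1)]] xy(4) by blast
    with R01 have "1 \<in> ?I" by simp
    then obtain m r where mr: "1 = m + x * r" "m \<in> M" "r \<in> R" by blast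
    have "y = y * (m + x * r)" using mr(1) by simp
    also have "\<dots> = y * m + r * (x * y)" by (simp add: algebra_simps)
    finally show "y \<in> M" using Madd[OF Mmult[OF xy(2) mr(2)] Mmult[OF mr(3) xy(3)]] by simp
  qed
  ultimately show ?thesis using iM by (auto simp: prime_ideal_of_def)
qed

lemma subring_of_range_to_fract: "subring_of (range (to_fract :: 'a::idom \<Rightarrow> 'a fract))"
  unfolding subring_of_def
proof (intro conjI ballI)
  show "0 \<in> range (to_fract :: 'a \<Rightarrow> 'a fract)" "1 \<in> range (to_fract :: 'a \<Rightarrow> 'a fract)"
    by (metis rangeI to_fract_0, metis rangeI to_fract_1)
next
  fix x y :: "'a fract" assume "x \<in> range to_fract" "y \<in> range to_fract"
  then obtain a b where "x = to_fract a" "y = to_fract b" by blast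
  then show "x + y \<in> range to_fract" "x - y \<in> range to_fract" "x * y \<in> range to_fract"
    by (metis rangeI to_fract_add, metis rangeI to_fract_diff, metis rangeI to_fract_mult)
qed

lemma frac_of_range_to_fract: "frac_of (range (to_fract :: 'a::idom \<Rightarrow> 'a fract)) = UNIV"
proof -
  have "x \<in> frac_of (range to_fract)" for x :: "'a fract"
  proof (cases x)
    case (Fract a b)
    then have "x = to_fract a / to_fract b" "to_fract b \<noteq> 0"
      by (simp_all add: Fract_conv_to_fract)
    then show ?thesis unfolding frac_of_def by blast
  qed
  then show ?thesis by blast
qed

theorem corollary3p2:
  assumes "straight_domain TYPE('a::idom)"
  shows "locally_divided_domain TYPE('a)"
proof -
  let ?R = "range (to_fract :: 'a \<Rightarrow> 'a fract)"
  have "divided (localize ?R M)" if "maximal_ideal_of ?R M" for M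
  proof -
    interpret localization ?R M
      using subring_of_range_to_fract prime_ideal_of_maximal[OF _ that] by unfold_locales auto
    show ?thesis
      using assms frac_of_range_to_fract by (intro divided_localize) (auto simp: straight_domain_def)
  qed
  then show ?thesis by (simp add: locally_divided_domain_def locally_divided_def)
qed

end
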